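(* For any two information trees $\mathcal T,\mathcal T'$ on $\mathcal I$: (i) $\mathcal T\succeq_{dif}\mathcal T'$ if and only if $\mathcal T\succeq_{FO}\mathcal T'$; (ii) $\mathcal T\succeq_{FO}\mathcal T'$ if and only if $\mathcal T'\succeq_{SO}\mathcal T$.
   Context: Model. Fix an integer $I\ge2$, agents $\mathcal I=\{1,\dots,I\}$, a prior $\rho\in(0,1)$ and a loss probability $\varepsilon\in(0,1)$. A state of nature $\theta\in\{g,b\}$ has $\Pr(\theta=g)=\rho$. A forest $F$ on $\mathcal I$ is a collection of vertex-disjoint undirected trees $T^1,\dots,T^R$ whose vertex sets partition $\mathcal I$; a seeding $s=(s^1,\dots,s^R)$ chooses exactly one vertex $s^r$ of each $T^r$. The pair $\mathcal T=(F,s)$ is an information tree: orient each $T^r$ away from $s^r$ and add a root $0$ (the planner) with an arc $0\to s^r$ for each $r$. If $\theta=b$ no messages are sent. If $\theta=g$ the planner sends a message along each arc $0\to s^r$, and every agent who receives a message forwards it along every arc leaving her. Each transmission along an arc is lost independently with probability $\varepsilon$. Agent $i$ observes only $x_i\in\{y,n\}$. $\Omega=\{g,b\}\times\{y,n\}^I$, $\mathbb P_{\mathcal T}$ the induced probability. $G=\{\theta=g\}$, $Y_i=\{x_i=y\}$, $N_i=\Omega\setminus Y_i$, $Y^*=\bigcap_iY_i$. Orders: let $d(i)$ (resp. $d'(i)$) be the number of arcs on the path from $0$ to $i$ in $\mathcal T$ (resp. $\mathcal T'$). $\mathcal T\succeq_{dif}\mathcal T'$ if there is a permutation $\pi$ of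 $\mathcal I$ with $d(i)\le d'(\pi(i))$ for all $i$. $\mathcal T\succeq_{FO}\mathcal T'$ if there is a permutation $\pi$ such that for every $i$ the binary experiment "signal $x_i$ about the event $G$ vs. $\Omega\setminus G$" under $\mathbb P_{\mathcal T}$ is Blackwell (weakly) more informative than the experiment "signal $x_{\pi(i)}$ about $G$ vs. $\Omega\setminus G$" under $\mathbb P_{\mathcal T'}$. $\mathcal T\succeq_{SO}\mathcal T'$ is defined in the same way with the event $Y^*$ in place of $G$. *)

theory Defs
  imports Complex_Main
begin

text \<open>Agents are 1..I; vertex 0 is the planner (root).
  An information tree (F,s) is represented by its orientation away from the root 0:
  a parent map par, where par i is the tail of the unique arc entering agent i
  (par i = 0 iff i is the seed of its tree).\<close>

definition info_tree :: "nat \<Rightarrow> (nat \<Rightarrow> nat) \<Rightarrow> bool" where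
  "info_tree I par \<longleftrightarrow> (\<forall>i\<in>{1..I}. par i \<in> {0..I} \<and> (\<exists>k. (par ^^ k) i = 0))"

definition depth :: "(nat \<Rightarrow> nat) \<Rightarrow> nat \<Rightarrow> nat" where
  "depth par i = (LEAST k. (par ^^ k) i = 0)"

text \<open>Outcomes: (theta, x) with theta = True meaning g, x i = True meaning y.
  Omega = {g,b} x {y,n}^I, signals extended by False outside 1..I.\<close>
type_synonym outcome = "bool \<times> (nat \<Rightarrow> bool)"

definition Omega :: "nat \<Rightarrow> outcome set" where
  "Omega I = {(th, x). \<forall>i. i \<notin> {1..I} \<longrightarrow> \<not> x i}"

text \<open>Probability of an outcome under the diffusion model: if theta = b nobody gets a
  message; if theta = g, agent i gets a message with prob. 1-eps iff her sender
  (planner or parent) holds a message, independently across arcs.\<close>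
definition weight :: "nat \<Rightarrow> real \<Rightarrow> real \<Rightarrow> (nat \<Rightarrow> nat) \<Rightarrow> outcome \<Rightarrow> real" where
  "weight I rho eps par \<omega> =
     (if fst \<omega> then
        rho * (\<Prod>i\<in>{1..I}.
          (if par i = 0 \<or> snd \<omega> (par i)
           then (if snd \<omega> i then 1 - eps else eps)
           else (if snd \<omega> i then 0 else 1)))
      else
        (1 - rho) * (if (\<forall>i\<in>{1..I}. \<not> snd \<omega> i) then 1 else 0))"

definition prob :: "nat \<Rightarrow> real \<Rightarrow> real \<Rightarrow> (nat \<Rightarrow> nat) \<Rightarrow> outcome set \<Rightarrow> real" where
  "prob I rho eps par A = (\<Sum>\<omega>\<in>Omega I \<inter> A. weight I rho eps par \<omega>)"

definition cond_prob :: "nat \<Rightarrow> real \<Rightarrow> real \<Rightarrow> (nat \<Rightarrow> nat) \<Rightarrow> outcome set \<Rightarrow> outcome set \<Rightarrow> real" where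
  "cond_prob I rho eps par A B = prob I rho eps par (A \<inter> B) / prob I rho eps par B"

definition evG :: "outcome set" where
  "evG = {\<omega>. fst \<omega>}"

definition evYstar :: "nat \<Rightarrow> outcome set" where
  "evYstar I = {\<omega>. \<forall>i\<in>{1..I}. snd \<omega> i}"

text \<open>Binary experiment (signal x_i about E vs. Omega - E): state s (True = E,
  False = complement) and signal value v give Pr(x_i = v given state).\<close>
definition info_exp :: "nat \<Rightarrow> real \<Rightarrow> real \<Rightarrow> (nat \<Rightarrow> nat) \<Rightarrow> outcome set \<Rightarrow> nat \<Rightarrow> bool \<Rightarrow> bool \<Rightarrow> real" where
  "info_exp I rho eps par E i s v =
     cond_prob I rho eps par {\<omega>. snd \<omega> i = v} (if s then E else Omega I - E)"

definition blackwell_geq :: "(bool \<Rightarrow> bool \<Rightarrow> real) \<Rightarrow> (bool \<Rightarrow> bool \<Rightarrow> real) \<Rightarrow> bool" where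
  "blackwell_geq P Q \<longleftrightarrow>
     (\<exists>M :: bool \<Rightarrow> bool \<Rightarrow> real.
        (\<forall>v w. 0 \<le> M v w) \<and> (\<forall>v. M v True + M v False = 1) \<and>
        (\<forall>s w. Q s w = P s True * M True w + P s False * M False w))"

definition dif_geq :: "nat \<Rightarrow> (nat \<Rightarrow> nat) \<Rightarrow> (nat \<Rightarrow> nat) \<Rightarrow> bool" where
  "dif_geq I par par' \<longleftrightarrow>
     (\<exists>\<pi>. bij_betw \<pi> {1..I} {1..I} \<and> (\<forall>i\<in>{1..I}. depth par i \<le> depth par' (\<pi> i)))"

definition FO_geq :: "nat \<Rightarrow> real \<Rightarrow> real \<Rightarrow> (nat \<Rightarrow> nat) \<Rightarrow> (nat \<Rightarrow> nat) \<Rightarrow> bool" where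
  "FO_geq I rho eps par par' \<longleftrightarrow>
     (\<exists>\<pi>. bij_betw \<pi> {1..I} {1..I} \<and>
        (\<forall>i\<in>{1..I}. blackwell_geq (info_exp I rho eps par evG i)
                                   (info_exp I rho eps par' evG (\<pi> i))))"

definition SO_geq :: "nat \<Rightarrow> real \<Rightarrow> real \<Rightarrow> (nat \<Rightarrow> nat) \<Rightarrow> (nat \<Rightarrow> nat) \<Rightarrow> bool" where
  "SO_geq I rho eps par par' \<longleftrightarrow>
     (\<exists>\<pi>. bij_betw \<pi> {1..I} {1..I} \<and>
        (\<forall>i\<in>{1..I}. blackwell_geq (info_exp I rho eps par (evYstar I) i)
                                   (info_exp I rho eps par' (evYstar I) (\<pi> i))))"

end

theory Submission
  imports Defs
begin

text \<open>Given \<open>\<theta> = g\<close>, the signal profile is a Markov chain along the tree: each agent's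
  signal depends only on her parent's. Summing out the agents one leaf at a time shows that
  agent \<open>i\<close> is informed with probability \<open>q^d(i)\<close>, \<open>q = 1 - \<epsilon>\<close>, and that everybody is informed
  with probability \<open>q^I\<close>. Hence the first-order experiment of \<open>i\<close> is \<open>(q^d(i), 0)\<close> (probability
  of \<open>y\<close> under \<open>G\<close> and off \<open>G\<close>), while the second-order one is \<open>(1, \<rho>(q^d(i) - q^I)/(1 - \<rho>q^I))\<close>.
  A binary experiment with a zero entry Blackwell-dominates another of the same kind exactly when
  its other entry is further from that zero, so both orders compare depths agent by agent:
  first-order informativeness prefers small depth and second-order informativeness large depth.\<close>

lemma finite_funs_fixed_outside:
  assumes "finite U"
  shows "finite {x::nat \<Rightarrow> bool. \<forall>j. j \<notin> U \<longrightarrow> x j = g j}"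
proof -
  let ?S = "{x::nat \<Rightarrow> bool. \<forall>j. j \<notin> U \<longrightarrow> x j = g j}"
  have "finite ((\<lambda>x. {j\<in>U. x j}) ` ?S)"
    by (rule finite_subset[OF _ finite_Pow_iff[THEN iffD2, OF assms]]) auto
  moreover have "inj_on (\<lambda>x. {j\<in>U. x j}) ?S"
    by (rule inj_onI) (auto simp: fun_eq_iff set_eq_iff)
  ultimately show ?thesis by (rule finite_imageD)
qed

lemma sum_funs_fixed_outside_split:
  fixes f :: "(nat \<Rightarrow> bool) \<Rightarrow> real"
  assumes "finite U" "l \<in> U"
  shows "(\<Sum>x\<in>{x. \<forall>j. j \<notin> U \<longrightarrow> x j = g j}. f x) =
         (\<Sum>x\<in>{x. \<forall>j. j \<notin> U - {l} \<longrightarrow> x j = (g(l := True)) j}. f x) +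
         (\<Sum>x\<in>{x. \<forall>j. j \<notin> U - {l} \<longrightarrow> x j = (g(l := False)) j}. f x)"
proof -
  define S where "S b = {x. \<forall>j. j \<notin> U - {l} \<longrightarrow> x j = (g(l := b)) j}" for b
  have "{x. \<forall>j. j \<notin> U \<longrightarrow> x j = g j} = S True \<union> S False"
    using assms(2) unfolding S_def by (auto simp: fun_upd_def)
  moreover have "finite (S b)" for b
    unfolding S_def using assms(1) by (intro finite_funs_fixed_outside) simp
  moreover have "S True \<inter> S False = {}" unfolding S_def by auto
  ultimately show ?thesis unfolding S_def[symmetric] by (simp add: sum.union_disjoint)
qed

lemma exists_exit_vertex: "i \<in> U \<Longrightarrow> (T ^^ k) i \<notin> U \<Longrightarrow> \<exists>l\<in>U. T l \<notin> U"
  by (induction k arbitrary: i) (auto simp: funpow_Suc_right)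

text \<open>Summing out an agent \<open>l\<close> whose parent lies outside \<open>U\<close> removes the factor \<open>F l\<close>,
  which is a probability kernel in \<open>x l\<close>; induction on \<open>card U\<close> does the rest.\<close>

lemma sum_prod_kernels_eq_1:
  fixes F :: "nat \<Rightarrow> (nat \<Rightarrow> bool) \<Rightarrow> real" and T :: "nat \<Rightarrow> nat"
  assumes "finite U" "\<And>i. i \<in> U \<Longrightarrow> \<exists>k. (T ^^ k) i \<notin> U"
    and "\<And>i x y. i \<in> U \<Longrightarrow> x i = y i \<Longrightarrow> x (T i) = y (T i) \<Longrightarrow> F i x = F i y"
    and "\<And>i x. i \<in> U \<Longrightarrow> F i (x(i := True)) + F i (x(i := False)) = 1"
  shows "(\<Sum>x\<in>{x. \<forall>j. j \<notin> U \<longrightarrow> x j = g j}. \<Prod>i\<in>U. F i x) = 1"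
  using assms
proof (induction "card U" arbitrary: U g rule: less_induct)
  case less
  show ?case
  proof (cases "U = {}")
    case True
    then have "{x. \<forall>j. j \<notin> U \<longrightarrow> x j = g j} = {g}" by (auto simp: fun_eq_iff)
    then show ?thesis using True by simp
  next
    case False
    then obtain i where i: "i \<in> U" by blast
    obtain k where "(T ^^ k) i \<notin> U" using less.prems(2)[OF i] by blast
    with i obtain l where l: "l \<in> U" "T l \<notin> U" by (meson exists_exit_vertex)
    have IH: "(\<Sum>x\<in>{x. \<forall>j. j \<notin> U - {l} \<longrightarrow> x j = h j}. \<Prod>i\<in>U - {l}. F i x) = 1" for h
    proof (rule less.hyps)
      show "card (U - {l}) < card U" using less.prems(1) l(1) by (rule card_Diff1_less)
      show "finite (U - {l})" using less.prems(1) by simp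
      show "\<exists>k. (T ^^ k) j \<notin> U - {l}" if "j \<in> U - {l}" for j
        using less.prems(2)[of j] that by blast
      show "F j x = F j y" if "j \<in> U - {l}" "x j = y j" "x (T j) = y (T j)" for j x y
        using less.prems(3)[of j x y] that by blast
      show "F j (x(j := True)) + F j (x(j := False)) = 1" if "j \<in> U - {l}" for j x
        using less.prems(4)[of j x] that by blast
    qed
    define S where "S b = {x. \<forall>j. j \<notin> U - {l} \<longrightarrow> x j = (g(l := b)) j}" for b
    have "(\<Sum>x\<in>S b. \<Prod>i\<in>U. F i x) = F l (g(l := b))" for b
    proof -
      have "(\<Prod>i\<in>U. F i x) = F l (g(l := b)) * (\<Prod>i\<in>U - {l}. F i x)" if "x \<in> S b" for x
      proof -
        have "F l x = F l (g(l := b))"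
          using that l unfolding S_def by (intro less.prems(3)) auto
        then show ?thesis using prod.remove[OF less.prems(1) l(1), of "\<lambda>i. F i x"] by simp
      qed
      then have "(\<Sum>x\<in>S b. \<Prod>i\<in>U. F i x) = (\<Sum>x\<in>S b. F l (g(l := b)) * (\<Prod>i\<in>U - {l}. F i x))"
        by (rule sum.cong[OF refl])
      also have "\<dots> = F l (g(l := b))"
        using IH unfolding S_def by (simp add: sum_distrib_left[symmetric])
      finally show ?thesis .
    qed
    then show ?thesis
      using sum_funs_fixed_outside_split[OF less.prems(1) l(1)] less.prems(4)[OF l(1)]
      unfolding S_def by simp
  qed
qed

lemma info_tree_parent: "info_tree I T \<Longrightarrow> i \<in> {1..I} \<Longrightarrow> T i \<in> {0..I}"
  unfolding info_tree_def by blast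

lemma info_tree_reaches_root: "info_tree I T \<Longrightarrow> i \<in> {1..I} \<Longrightarrow> \<exists>k. (T ^^ k) i = 0"
  unfolding info_tree_def by blast

lemma info_tree_parent_neq:
  assumes "info_tree I T" "i \<in> {1..I}"
  shows "T i \<noteq> i"
proof
  assume "T i = i"
  then have "(T ^^ k) i = i" for k by (induction k) auto
  then show False using info_tree_reaches_root[OF assms] assms(2) by auto
qed

lemma funpow_depth: "info_tree I T \<Longrightarrow> i \<in> {1..I} \<Longrightarrow> (T ^^ depth T i) i = 0"
  unfolding depth_def using info_tree_reaches_root by (metis (mono_tags) LeastI)

lemma funpow_less_depth: "m < depth T i \<Longrightarrow> (T ^^ m) i \<noteq> 0"
  unfolding depth_def using not_less_Least by blast

lemma depth_pos: "info_tree I T \<Longrightarrow> i \<in> {1..I} \<Longrightarrow> 0 < depth T i"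
  using funpow_depth by (metis atLeastAtMost_iff funpow_0 gr0I not_one_le_zero)

lemma ancestor_in_agents:
  "info_tree I T \<Longrightarrow> i \<in> {1..I} \<Longrightarrow> m < depth T i \<Longrightarrow> (T ^^ m) i \<in> {1..I}"
proof (induction m)
  case (Suc m)
  then have "T ((T ^^ m) i) \<in> {0..I}" using info_tree_parent by simp
  moreover have "(T ^^ Suc m) i \<noteq> 0" using funpow_less_depth Suc.prems by blast
  ultimately show ?case by auto
qed simp

text \<open>A repetition \<open>T^a i = T^b i\<close>, \<open>a < b\<close>, would let the path reach \<open>0\<close> already after
  \<open>depth T i - (b - a)\<close> steps.\<close>

lemma inj_on_ancestors:
  assumes "info_tree I T" "i \<in> {1..I}"
  shows "inj_on (\<lambda>k. (T ^^ k) i) {..<depth T i}"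
proof (rule linorder_inj_onI')
  fix a b assume ab: "a \<in> {..<depth T i}" "b \<in> {..<depth T i}" "a < b"
  show "(T ^^ a) i \<noteq> (T ^^ b) i"
  proof
    assume eq: "(T ^^ a) i = (T ^^ b) i"
    have "(T ^^ (depth T i - b + a)) i = (T ^^ (depth T i - b)) ((T ^^ a) i)"
      by (simp add: funpow_add)
    also have "\<dots> = (T ^^ (depth T i - b + b)) i" by (simp add: eq funpow_add)
    also have "\<dots> = 0" using ab funpow_depth[OF assms] by simp
    finally have "(T ^^ (depth T i - b + a)) i = 0" .
    moreover have "depth T i - b + a < depth T i" using ab by auto
    ultimately show False using funpow_less_depth by blast
  qed
qed

lemma parent_mem_ancestors:
  assumes T: "info_tree I T" and i: "i \<in> {1..I}"
    and "j \<in> (\<lambda>k. (T ^^ k) i) ` {..<depth T i}"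
  shows "T j = 0 \<or> T j \<in> (\<lambda>k. (T ^^ k) i) ` {..<depth T i}"
proof -
  from assms(3) obtain k where k: "k \<in> {..<depth T i}" "j = (T ^^ k) i" by (rule imageE)
  then have Tj: "T j = (T ^^ Suc k) i" by simp
  show ?thesis
  proof (cases "Suc k < depth T i")
    case True
    then show ?thesis using Tj by (intro disjI2 image_eqI[where x = "Suc k"]) auto
  next
    case False
    then have "Suc k = depth T i" using k(1) by simp
    then show ?thesis using Tj funpow_depth[OF T i] by simp
  qed
qed

definition profiles :: "nat \<Rightarrow> (nat \<Rightarrow> bool) set" where
  "profiles I = {x. \<forall>j. j \<notin> {1..I} \<longrightarrow> \<not> x j}"

definition msg_kernel :: "real \<Rightarrow> (nat \<Rightarrow> nat) \<Rightarrow> nat \<Rightarrow> (nat \<Rightarrow> bool) \<Rightarrow> real" where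
  "msg_kernel eps T i x =
     (if T i = 0 \<or> x (T i) then (if x i then 1 - eps else eps) else (if x i then 0 else 1))"

text \<open>The conditional probability of a property of the signal profile given \<open>G\<close>.\<close>

definition good_prob :: "nat \<Rightarrow> real \<Rightarrow> (nat \<Rightarrow> nat) \<Rightarrow> ((nat \<Rightarrow> bool) \<Rightarrow> bool) \<Rightarrow> real" where
  "good_prob I eps T P = (\<Sum>x\<in>{x\<in>profiles I. P x}. \<Prod>j\<in>{1..I}. msg_kernel eps T j x)"

lemma finite_profiles: "finite (profiles I)"
  using finite_funs_fixed_outside[of "{1..I}" "\<lambda>_. False"] by (simp add: profiles_def)

lemma sum_prod_msg_kernel_eq_1:
  assumes "info_tree I T" "U \<subseteq> {1..I}"
  shows "(\<Sum>x\<in>{x. \<forall>j. j \<notin> U \<longrightarrow> x j = g j}. \<Prod>i\<in>U. msg_kernel eps T i x) = 1"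
proof (rule sum_prod_kernels_eq_1)
  show "finite U" using assms(2) finite_subset by blast
  show "\<exists>k. (T ^^ k) i \<notin> U" if i: "i \<in> U" for i
  proof -
    obtain k where "(T ^^ k) i = 0" using info_tree_reaches_root[OF assms(1)] assms(2) i by blast
    moreover have "0 \<notin> U" using assms(2) by auto
    ultimately show ?thesis by metis
  qed
  show "msg_kernel eps T i (x(i := True)) + msg_kernel eps T i (x(i := False)) = 1"
    if "i \<in> U" for i x
    using info_tree_parent_neq[OF assms(1)] assms(2) that by (auto simp: msg_kernel_def)
qed (simp add: msg_kernel_def)

lemma good_prob_ancestor_closed:
  assumes "info_tree I T" "A \<subseteq> {1..I}" "\<And>j. j \<in> A \<Longrightarrow> T j = 0 \<or> T j \<in> A"
  shows "good_prob I eps T (\<lambda>x. \<forall>j\<in>A. x j) = (1 - eps) ^ card A"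
proof -
  define U where "U = {1..I} - A"
  have profiles_A: "{x\<in>profiles I. \<forall>j\<in>A. x j} = {x. \<forall>j. j \<notin> U \<longrightarrow> x j = (j \<in> A)}"
    using assms(2) unfolding profiles_def U_def by auto
  have "(\<Prod>j\<in>{1..I}. msg_kernel eps T j x) = (1 - eps) ^ card A * (\<Prod>j\<in>U. msg_kernel eps T j x)"
    if "\<forall>j\<in>A. x j" for x
  proof -
    have "msg_kernel eps T j x = 1 - eps" if "j \<in> A" for j
      using \<open>\<forall>j\<in>A. x j\<close> assms(3)[OF that] that by (auto simp: msg_kernel_def)
    then have "(\<Prod>j\<in>A. msg_kernel eps T j x) = (\<Prod>j\<in>A. 1 - eps)" by simp
    then show ?thesis
      using prod.subset_diff[OF assms(2) finite_atLeastAtMost, of "\<lambda>j. msg_kernel eps T j x"]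
      unfolding U_def by (simp add: mult.commute)
  qed
  then have "good_prob I eps T (\<lambda>x. \<forall>j\<in>A. x j) =
      (1 - eps) ^ card A * (\<Sum>x\<in>{x. \<forall>j. j \<notin> U \<longrightarrow> x j = (j \<in> A)}. \<Prod>j\<in>U. msg_kernel eps T j x)"
    unfolding good_prob_def profiles_A[symmetric] sum_distrib_left by (intro sum.cong) auto
  also have "\<dots> = (1 - eps) ^ card A"
    using sum_prod_msg_kernel_eq_1[OF assms(1), of U] unfolding U_def by simp
  finally show ?thesis .
qed

lemma good_prob_True: "info_tree I T \<Longrightarrow> good_prob I eps T (\<lambda>x. True) = 1"
  using good_prob_ancestor_closed[of I T "{}"] by simp

lemma good_prob_everyone:
  assumes "info_tree I T"
  shows "good_prob I eps T (\<lambda>x. \<forall>j\<in>{1..I}. x j) = (1 - eps) ^ I"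
proof -
  have "good_prob I eps T (\<lambda>x. \<forall>j\<in>{1..I}. x j) = (1 - eps) ^ card {1..I}"
  proof (rule good_prob_ancestor_closed[OF assms subset_refl])
    show "T j = 0 \<or> T j \<in> {1..I}" if "j \<in> {1..I}" for j
      using info_tree_parent[OF assms that] by auto
  qed
  then show ?thesis by simp
qed

lemma msg_kernel_prod_nonzero_ancestor:
  assumes "info_tree I T" "i \<in> {1..I}" "(\<Prod>j\<in>{1..I}. msg_kernel eps T j x) \<noteq> 0" "x i"
    and "k < depth T i"
  shows "x ((T ^^ k) i)"
  using assms(5)
proof (induction k)
  case (Suc k)
  have "(T ^^ k) i \<in> {1..I}" using ancestor_in_agents assms(1,2) Suc.prems by simp
  then have "msg_kernel eps T ((T ^^ k) i) x \<noteq> 0" using assms(3) by simp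
  moreover have "T ((T ^^ k) i) \<noteq> 0" using funpow_less_depth[of "Suc k"] Suc.prems by simp
  ultimately show ?case using Suc by (auto simp: msg_kernel_def split: if_splits)
qed (use assms(4) in simp)

text \<open>Only profiles in which the whole path from \<open>i\<close> to the root is informed contribute.\<close>

lemma good_prob_signal:
  assumes T: "info_tree I T" and i: "i \<in> {1..I}"
  shows "good_prob I eps T (\<lambda>x. x i) = (1 - eps) ^ depth T i"
proof -
  define A where "A = (\<lambda>k. (T ^^ k) i) ` {..<depth T i}"
  have A_closed: "T j = 0 \<or> T j \<in> A" if "j \<in> A" for j
    using parent_mem_ancestors[OF T i] that unfolding A_def .
  have "i \<in> A" unfolding A_def using depth_pos[OF T i] by (intro image_eqI[where x = 0]) auto
  then have "good_prob I eps T (\<lambda>x. x i) = good_prob I eps T (\<lambda>x. \<forall>j\<in>A. x j)"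
    unfolding good_prob_def
  proof (intro sum.mono_neutral_right)
    show "finite {x \<in> profiles I. x i}" using finite_profiles by simp
    show "{x \<in> profiles I. \<forall>j\<in>A. x j} \<subseteq> {x \<in> profiles I. x i}" using \<open>i \<in> A\<close> by auto
    show "\<forall>x\<in>{x \<in> profiles I. x i} - {x \<in> profiles I. \<forall>j\<in>A. x j}.
            (\<Prod>j\<in>{1..I}. msg_kernel eps T j x) = 0"
    proof (rule ballI, rule ccontr)
      fix x assume x: "x \<in> {x \<in> profiles I. x i} - {x \<in> profiles I. \<forall>j\<in>A. x j}"
        and "(\<Prod>j\<in>{1..I}. msg_kernel eps T j x) \<noteq> 0"
      then have "\<forall>j\<in>A. x j"
        using msg_kernel_prod_nonzero_ancestor[OF T i] unfolding A_def by auto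
      then show False using x by auto
    qed
  qed
  also have "\<dots> = (1 - eps) ^ card A"
  proof (rule good_prob_ancestor_closed[OF T _ A_closed])
    show "A \<subseteq> {1..I}" using ancestor_in_agents[OF T i] unfolding A_def by auto
  qed
  also have "card A = depth T i"
    using card_image[OF inj_on_ancestors[OF T i]] unfolding A_def by simp
  finally show ?thesis .
qed

lemma Omega_eq: "Omega I = UNIV \<times> profiles I"
  unfolding Omega_def profiles_def by auto

lemma finite_Omega: "finite (Omega I)"
  using finite_profiles by (simp add: Omega_eq)

lemma prob_cong: "Omega I \<inter> A = Omega I \<inter> B \<Longrightarrow> prob I rho eps T A = prob I rho eps T B"
  by (simp add: prob_def)

lemma prob_split_event:
  "prob I rho eps T B = prob I rho eps T (B \<inter> A) + prob I rho eps T (B - A)"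
proof -
  have "finite (Omega I \<inter> B)" using finite_Omega by simp
  then show ?thesis
    unfolding prob_def using sum.Int_Diff[of "Omega I \<inter> B" _ A] by (simp add: Int_assoc Int_Diff)
qed

text \<open>Given \<open>\<theta> = b\<close> the only possible profile is the one where nobody is informed.\<close>

lemma prob_eq_good_prob:
  "prob I rho eps T A = rho * good_prob I eps T (\<lambda>x. (True, x) \<in> A)
     + (1 - rho) * (if (False, \<lambda>_. False) \<in> A then 1 else 0)"
proof -
  define S where "S th = {x \<in> profiles I. (th, x) \<in> A}" for th
  have fin: "finite (S th)" for th unfolding S_def using finite_profiles by simp
  have Omega_A: "Omega I \<inter> A = Pair True ` S True \<union> Pair False ` S False"
  proof (rule set_eqI, clarify)
    fix th x
    show "(th, x) \<in> Omega I \<inter> A \<longleftrightarrow> (th, x) \<in> Pair True ` S True \<union> Pair False ` S False"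
      by (cases th) (auto simp: Omega_eq S_def)
  qed
  have reindex: "sum (weight I rho eps T) (Pair th ` S th) = (\<Sum>x\<in>S th. weight I rho eps T (th, x))"
    for th by (simp add: sum.reindex inj_on_def)
  have "prob I rho eps T A = (\<Sum>x\<in>S True. weight I rho eps T (True, x))
      + (\<Sum>x\<in>S False. weight I rho eps T (False, x))"
    unfolding prob_def Omega_A reindex[symmetric] by (rule sum.union_disjoint) (use fin in auto)
  moreover have "weight I rho eps T (True, x) = rho * (\<Prod>j\<in>{1..I}. msg_kernel eps T j x)" for x
    unfolding weight_def msg_kernel_def fst_conv snd_conv by simp
  then have "(\<Sum>x\<in>S True. weight I rho eps T (True, x)) = rho * good_prob I eps T (\<lambda>x. (True, x) \<in> A)"
    unfolding good_prob_def S_def by (simp add: sum_distrib_left)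
  moreover have "(\<Sum>x\<in>S False. weight I rho eps T (False, x))
      = (\<Sum>x\<in>S False. if x = (\<lambda>_. False) then 1 - rho else 0)"
    by (intro sum.cong) (auto simp: S_def profiles_def weight_def fun_eq_iff)
  ultimately show ?thesis using fin by (simp add: S_def profiles_def)
qed

definition bin_exp :: "real \<Rightarrow> real \<Rightarrow> bool \<Rightarrow> bool \<Rightarrow> real" where
  "bin_exp p q s v = (if v then (if s then p else q) else 1 - (if s then p else q))"

lemma info_exp_eq_bin_exp:
  assumes "prob I rho eps T E \<noteq> 0" "prob I rho eps T (Omega I - E) \<noteq> 0"
  shows "info_exp I rho eps T E i = bin_exp (cond_prob I rho eps T {\<omega>. snd \<omega> i} E)
                                             (cond_prob I rho eps T {\<omega>. snd \<omega> i} (Omega I - E))"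
proof (intro ext)
  fix s v
  let ?P = "prob I rho eps T" and ?Yi = "{\<omega>. snd \<omega> i}"
  define B where "B = (if s then E else Omega I - E)"
  have B: "?P B \<noteq> 0" using assms unfolding B_def by simp
  have y: "(if s then cond_prob I rho eps T ?Yi E else cond_prob I rho eps T ?Yi (Omega I - E))
      = ?P (?Yi \<inter> B) / ?P B"
    unfolding B_def cond_prob_def by simp
  have "{\<omega>. snd \<omega> i = False} \<inter> B = B - ?Yi" by auto
  then have n: "?P ({\<omega>. snd \<omega> i = False} \<inter> B) = ?P B - ?P (?Yi \<inter> B)"
    using prob_split_event[of I rho eps T B ?Yi] by (simp add: Int_commute)
  show "info_exp I rho eps T E i s v = bin_exp (cond_prob I rho eps T ?Yi E)
                                               (cond_prob I rho eps T ?Yi (Omega I - E)) s v"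
    unfolding info_exp_def bin_exp_def y unfolding B_def[symmetric] cond_prob_def
    using B n by (cases v) (simp_all add: diff_divide_distrib)
qed

lemma info_exp_good:
  assumes T: "info_tree I T" and i: "i \<in> {1..I}" and rho: "0 < rho" "rho < 1"
  shows "info_exp I rho eps T evG i = bin_exp ((1 - eps) ^ depth T i) 0"
proof -
  have "prob I rho eps T evG = rho"
    by (simp add: prob_eq_good_prob evG_def good_prob_True[OF T])
  moreover have "prob I rho eps T (Omega I - evG) = 1 - rho"
    by (simp add: prob_eq_good_prob evG_def good_prob_def Omega_def)
  moreover have "prob I rho eps T ({\<omega>. snd \<omega> i} \<inter> evG) = rho * (1 - eps) ^ depth T i"
    by (simp add: prob_eq_good_prob evG_def good_prob_signal[OF T i])
  moreover have "prob I rho eps T ({\<omega>. snd \<omega> i} \<inter> (Omega I - evG)) = 0"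
    by (simp add: prob_eq_good_prob evG_def good_prob_def)
  ultimately show ?thesis
    using info_exp_eq_bin_exp[of I rho eps T evG i] rho by (simp add: cond_prob_def)
qed

lemma info_exp_everyone:
  assumes T: "info_tree I T" and i: "i \<in> {1..I}" and rho: "0 < rho" "rho < 1"
    and eps: "0 < eps" "eps < 1"
  shows "info_exp I rho eps T (evYstar I) i =
    bin_exp 1 (rho * ((1 - eps) ^ depth T i - (1 - eps) ^ I) / (1 - rho * (1 - eps) ^ I))"
proof -
  let ?prob = "prob I rho eps T" and ?Y = "evYstar I" and ?Yi = "{\<omega>. snd \<omega> i}"
  have "(\<lambda>x. (True, x) \<in> ?Y) = (\<lambda>x. \<forall>j\<in>{1..I}. x j)" by (simp add: evYstar_def)
  moreover have "(False, \<lambda>_. False) \<notin> ?Y" using i by (auto simp: evYstar_def)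
  ultimately have Y: "?prob ?Y = rho * (1 - eps) ^ I"
    unfolding prob_eq_good_prob by (simp only: good_prob_everyone[OF T]) simp
  have "?prob (Omega I) = 1"
    using good_prob_True[OF T] by (simp add: prob_eq_good_prob Omega_eq good_prob_def profiles_def)
  moreover have "?prob (Omega I \<inter> ?Y) = ?prob ?Y" by (rule prob_cong) auto
  ultimately have nY: "?prob (Omega I - ?Y) = 1 - rho * (1 - eps) ^ I"
    using prob_split_event[of I rho eps T "Omega I" ?Y] Y by simp
  have "?prob ?Yi = rho * (1 - eps) ^ depth T i"
    using i by (simp add: prob_eq_good_prob good_prob_signal[OF T i])
  moreover have "?Yi \<inter> ?Y = ?Y" using i by (auto simp: evYstar_def)
  moreover have "?prob (?Yi \<inter> (Omega I - ?Y)) = ?prob (?Yi - ?Y)" by (rule prob_cong) auto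
  ultimately have YinY: "?prob (?Yi \<inter> (Omega I - ?Y)) = rho * ((1 - eps) ^ depth T i - (1 - eps) ^ I)"
    using prob_split_event[of I rho eps T ?Yi ?Y] Y by (simp add: algebra_simps)
  have "rho * (1 - eps) ^ I < 1"
    using rho eps by (smt (verit) mult_left_le power_le_one)
  then show ?thesis
    using info_exp_eq_bin_exp[of I rho eps T ?Y i] Y nY YinY \<open>?Yi \<inter> ?Y = ?Y\<close> rho eps
    by (simp add: cond_prob_def)
qed

lemma blackwell_geq_flip:
  "blackwell_geq (\<lambda>s v. P (\<not> s) (\<not> v)) (\<lambda>s v. Q (\<not> s) (\<not> v)) \<longleftrightarrow> blackwell_geq P Q"
proof -
  have flip: "blackwell_geq (\<lambda>s v. P (\<not> s) (\<not> v)) (\<lambda>s v. Q (\<not> s) (\<not> v))"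
    if PQ: "blackwell_geq P Q" for P Q :: "bool \<Rightarrow> bool \<Rightarrow> real"
  proof -
    obtain M where M: "\<forall>v w. 0 \<le> M v w" "\<forall>v. M v True + M v False = 1"
      "\<forall>s w. Q s w = P s True * M True w + P s False * M False w"
      using PQ unfolding blackwell_geq_def by blast
    show ?thesis unfolding blackwell_geq_def
      by (intro exI[where x = "\<lambda>v w. M (\<not> v) (\<not> w)"]) (use M in \<open>auto simp: add.commute\<close>)
  qed
  show ?thesis using flip[of P Q] flip[of "\<lambda>s v. P (\<not> s) (\<not> v)" "\<lambda>s v. Q (\<not> s) (\<not> v)"] by auto
qed

lemma blackwell_geq_bin_exp_0:
  assumes "0 < a" "0 \<le> b"
  shows "blackwell_geq (bin_exp a 0) (bin_exp b 0) \<longleftrightarrow> b \<le> a"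
proof
  assume "blackwell_geq (bin_exp a 0) (bin_exp b 0)"
  then obtain M where M: "\<forall>v w. 0 \<le> M v w" "\<forall>v. M v True + M v False = 1"
    "\<forall>s w. bin_exp b 0 s w = bin_exp a 0 s True * M True w + bin_exp a 0 s False * M False w"
    unfolding blackwell_geq_def by blast
  have "M False True = 0" using M(3)[rule_format, of False True] by (simp add: bin_exp_def)
  then have "b = a * M True True" using M(3)[rule_format, of True True] by (simp add: bin_exp_def)
  moreover have "M True True \<le> 1" using M(1,2) by (smt (verit))
  ultimately show "b \<le> a" using assms(1) by (simp add: mult_left_le)
next
  assume "b \<le> a"
  then show "blackwell_geq (bin_exp a 0) (bin_exp b 0)"
    unfolding blackwell_geq_def
    by (intro exI[where x = "bin_exp (b / a) 0"]) (use assms in \<open>auto simp: bin_exp_def field_simps\<close>)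
qed

lemma blackwell_geq_bin_exp_1:
  assumes "a < 1" "b \<le> 1"
  shows "blackwell_geq (bin_exp 1 a) (bin_exp 1 b) \<longleftrightarrow> a \<le> b"
proof -
  have "bin_exp 1 c = (\<lambda>s v. bin_exp (1 - c) 0 (\<not> s) (\<not> v))" for c
    by (auto simp: bin_exp_def fun_eq_iff)
  then show ?thesis using blackwell_geq_flip blackwell_geq_bin_exp_0[of "1 - a" "1 - b"] assms by simp
qed

lemma blackwell_geq_info_exp_good_iff:
  assumes "info_tree I T" "info_tree I T'" "i \<in> {1..I}" "j \<in> {1..I}"
    and "0 < rho" "rho < 1" "0 < eps" "eps < 1"
  shows "blackwell_geq (info_exp I rho eps T evG i) (info_exp I rho eps T' evG j)
           \<longleftrightarrow> depth T i \<le> depth T' j"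
  using assms by (simp add: info_exp_good blackwell_geq_bin_exp_0)

lemma blackwell_geq_info_exp_everyone_iff:
  assumes "info_tree I T" "info_tree I T'" "i \<in> {1..I}" "j \<in> {1..I}"
    and rho: "0 < rho" "rho < 1" and eps: "0 < eps" "eps < 1"
  shows "blackwell_geq (info_exp I rho eps T (evYstar I) i) (info_exp I rho eps T' (evYstar I) j)
           \<longleftrightarrow> depth T' j \<le> depth T i"
proof -
  define q where "q = 1 - eps"
  have q: "0 < q" "q < 1" using eps unfolding q_def by auto
  have lt1: "rho * q ^ n < 1" for n
    using rho q by (smt (verit) mult_left_le power_le_one)
  define D where "D = 1 - rho * q ^ I"
  have D: "0 < D" using lt1 unfolding D_def by simp
  have lt: "rho * (q ^ n - q ^ I) / D < 1" for n
    using lt1[of n] D by (simp add: D_def algebra_simps)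
  have "blackwell_geq (info_exp I rho eps T (evYstar I) i) (info_exp I rho eps T' (evYstar I) j)
      \<longleftrightarrow> rho * (q ^ depth T i - q ^ I) / D \<le> rho * (q ^ depth T' j - q ^ I) / D"
    unfolding info_exp_everyone[OF assms(1,3) rho eps] info_exp_everyone[OF assms(2,4) rho eps]
      q_def[symmetric] D_def[symmetric]
    by (rule blackwell_geq_bin_exp_1[OF lt less_imp_le[OF lt]])
  also have "\<dots> \<longleftrightarrow> q ^ depth T i \<le> q ^ depth T' j"
    using D rho by (simp add: divide_le_cancel)
  finally show ?thesis using q by simp
qed

lemma ex_bij_betw_inverse:
  assumes "bij_betw \<pi> S S" "\<forall>i\<in>S. R i (\<pi> i)"
  shows "\<exists>\<sigma>. bij_betw \<sigma> S S \<and> (\<forall>i\<in>S. R (\<sigma> i) i)"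
proof (intro exI conjI ballI)
  show "bij_betw (inv_into S \<pi>) S S" using bij_betw_inv_into[OF assms(1)] .
  show "R (inv_into S \<pi> i) i" if "i \<in> S" for i
    using assms that bij_betw_inv_into_right[OF assms(1) that] bij_betwE bij_betw_inv_into by metis
qed

lemma ex_bij_betw_cong:
  assumes "\<And>i j. i \<in> S \<Longrightarrow> j \<in> S \<Longrightarrow> P i j \<longleftrightarrow> Q i j"
  shows "(\<exists>\<pi>. bij_betw \<pi> S S \<and> (\<forall>i\<in>S. P i (\<pi> i))) \<longleftrightarrow> (\<exists>\<pi>. bij_betw \<pi> S S \<and> (\<forall>i\<in>S. Q i (\<pi> i)))"
  using assms bij_betwE by metis

theorem proposition4:
  fixes I :: nat and rho eps :: real and T T' :: "nat \<Rightarrow> nat"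
  assumes "I \<ge> 2" and "0 < rho" and "rho < 1" and "0 < eps" and "eps < 1"
    and "info_tree I T" and "info_tree I T'"
  shows "(dif_geq I T T' \<longleftrightarrow> FO_geq I rho eps T T') \<and>
         (FO_geq I rho eps T T' \<longleftrightarrow> SO_geq I rho eps T' T)"
proof -
  let ?depth_inv = "\<exists>\<sigma>. bij_betw \<sigma> {1..I} {1..I} \<and> (\<forall>i\<in>{1..I}. depth T (\<sigma> i) \<le> depth T' i)"
  have "FO_geq I rho eps T T' \<longleftrightarrow> dif_geq I T T'"
    unfolding FO_geq_def dif_geq_def
    by (intro ex_bij_betw_cong blackwell_geq_info_exp_good_iff) (use assms in auto)
  moreover have "SO_geq I rho eps T' T \<longleftrightarrow> ?depth_inv"
    unfolding SO_geq_def
    by (intro ex_bij_betw_cong blackwell_geq_info_exp_everyone_iff) (use assms in auto)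
  moreover have "dif_geq I T T' \<longleftrightarrow> ?depth_inv"
    unfolding dif_geq_def
    using ex_bij_betw_inverse[where R = "\<lambda>i j. depth T i \<le> depth T' j"]
          ex_bij_betw_inverse[where R = "\<lambda>i j. depth T j \<le> depth T' i"] by blast
  ultimately show ?thesis by blast
qed

end
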